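(* For all integers $m\geq1$ and $n\geq0$, \[ \int_0^\infty\frac{\sum_{j=0}^{n+1}\binom{n+1}{j}L_{4m(n+1-j)}x^{2j}}{(x^4+L_{4m}x^2+1)^{n+1}}\ln x\,dx=-\binom{2n}{n}\frac{\pi}{2^{2n+1}}\Bigl(2m\sqrt5\,F_{2m(2n+1)}\ln\alpha+O_nL_{2m(2n+1)}\Bigr) \] and \[ \int_0^\infty\frac{\sum_{j=0}^{n+1}\binom{n+1}{j}F_{4m(n+1-j)}x^{2j}}{(x^4+L_{4m}x^2+1)^{n+1}}\ln x\,dx=-\binom{2n}{n}\frac{\pi}{2^{2n+1}}\Bigl(\frac{2m}{\sqrt5}L_{2m(2n+1)}\ln\alpha+O_nF_{2m(2n+1)}\Bigr). \]
   Context: $O_n=\sum_{j=1}^n\frac1{2j-1}$ ($O_0=0$). $F_n$ and $L_n$ are the Fibonacci and Lucas numbers ($F_0=0,F_1=1$, $L_0=2,L_1=1$, $u_n=u_{n-1}+u_{n-2}$), and $\alpha=(1+\sqrt5)/2$. *)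

theory Defs
  imports "HOL-Analysis.Analysis" "HOL-Number_Theory.Fib"
begin

fun lucas :: "nat \<Rightarrow> nat" where
  "lucas 0 = 2"
| "lucas (Suc 0) = 1"
| "lucas (Suc (Suc n)) = lucas (Suc n) + lucas n"

definition oddharm :: "nat \<Rightarrow> real" where
  "oddharm n = (\<Sum>j=1..n. 1 / (2 * real j - 1))"

definition golden :: real where
  "golden = (1 + sqrt 5) / 2"

end

theory Submission
  imports Defs "HOL-Real_Asymp.Real_Asymp"
begin

text \<open>
  Put a = alpha^(2m). Since alpha times its conjugate is -1, the conjugate raised to the power 2m
  is 1/a, so L(2mk) = a^k + a^(-k) and sqrt 5 F(2mk) = a^k - a^(-k). By the binomial theorem the
  two numerators become (x^2 + a^2)^(n+1) +/- (x^2 + a^(-2))^(n+1), and the denominator factors as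
  ((x^2 + a^2) (x^2 + a^(-2)))^(n+1). Hence both integrals are combinations of
  J n c = integral of ln x / (x^2 + c^2)^(n+1) over (0, oo) at c = a and c = 1/a.
  Differentiating x / (x^2 + c^2)^(n+1) and ln x * x / (x^2 + c^2)^(n+1) yields recurrences in n
  for J n c and for the integral I n c of 1 / (x^2 + c^2)^(n+1); they are solved by
  I n c = W n / c^(2n+1) and J n c = W n (ln c - O n) / c^(2n+1) with W n = C(2n,n) pi / 2^(2n+1).
  The base case J 0 c = pi ln c / (2c) comes from the symmetry x \<mapsto> c^2/x.
\<close>

section \<open>Improper integrals on the positive half-line\<close>

lemma has_integral_zero_extension_Icc:
  fixes G g :: "real \<Rightarrow> real"
  assumes deriv: "\<And>x. x > 0 \<Longrightarrow> (G has_real_derivative g x) (at x)"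
    and lim0: "(G \<longlongrightarrow> A) (at_right 0)"
    and "a \<le> b"
  defines "H \<equiv> \<lambda>x. if x \<le> 0 then A else G x"
  shows "((\<lambda>x. if x \<in> {0<..} then g x else 0) has_integral (H b - H a)) {a..b}"
proof -
  have H_deriv: "(H has_real_derivative (if x \<in> {0<..} then g x else 0)) (at x)" if "x \<noteq> 0" for x
  proof (cases "x > 0")
    case True
    have "(H has_real_derivative g x) (at x)"
      by (rule has_field_derivative_transform_within_open[OF deriv[OF True], of "{0<..}"])
         (use True in \<open>auto simp: H_def\<close>)
    then show ?thesis using True by simp
  next
    case False
    with that have "x < 0" by simp
    have "(H has_real_derivative 0) (at x)"
      by (rule has_field_derivative_transform_within_open[OF DERIV_const[of A], of "{..<0}"])
         (use \<open>x < 0\<close> in \<open>auto simp: H_def\<close>)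
    then show ?thesis using \<open>x < 0\<close> by simp
  qed
  have "isCont H 0"
  proof -
    have "(H \<longlongrightarrow> A) (at_left 0)"
      by (rule tendsto_eventually, rule eventually_at_leftI[of "-1"]) (auto simp: H_def)
    moreover have "(H \<longlongrightarrow> A) (at_right 0)"
      by (rule Lim_transform_eventually[OF lim0], rule eventually_at_rightI[of 0 1]) (auto simp: H_def)
    ultimately show ?thesis
      by (simp add: isCont_def filterlim_split_at H_def)
  qed
  then have "isCont H x" for x
    using H_deriv DERIV_isCont by (cases "x = 0") auto
  then show ?thesis
    using \<open>a \<le> b\<close> H_deriv
    by (intro fundamental_theorem_of_calculus_strong[of "{0}"])
       (auto simp: has_real_derivative_iff_has_vector_derivative[symmetric]
             intro!: continuous_at_imp_continuous_on has_field_derivative_at_within)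
qed

lemma has_integral_Ioi_FTC:
  fixes G g :: "real \<Rightarrow> real"
  assumes deriv: "\<And>x. x > 0 \<Longrightarrow> (G has_real_derivative g x) (at x)"
    and lim0: "(G \<longlongrightarrow> A) (at_right 0)" and lim_top: "(G \<longlongrightarrow> B) at_top"
  shows "(g has_integral (B - A)) {0<..}"
proof -
  have unbounded: "{0<..} \<noteq> cbox a (b::real)" for a b
  proof
    assume eq: "{0<..} = cbox a b"
    have "max b 1 + 1 \<in> {0<..}" by (simp add: add_pos_pos)
    then have "max b 1 + 1 \<in> cbox a b" by (simp only: eq)
    then show False by auto
  qed
  show ?thesis
  proof (subst has_integral_alt, simp only: unbounded if_False simp_thms, intro allI impI)
    fix e :: real assume "e > 0"
    then obtain M where M: "\<And>b. b \<ge> M \<Longrightarrow> dist (G b) B < e"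
      using lim_top unfolding tendsto_iff eventually_at_top_linorder by blast
    show "\<exists>R>0. \<forall>a b. ball 0 R \<subseteq> cbox a b \<longrightarrow>
          (\<exists>z. ((\<lambda>x. if x \<in> {0<..} then g x else 0) has_integral z) (cbox a b) \<and> norm (z - (B - A)) < e)"
    proof (rule exI[of _ "\<bar>M\<bar> + 1"], intro conjI allI impI)
      fix a b :: real assume ball: "ball 0 (\<bar>M\<bar> + 1) \<subseteq> cbox a b"
      have "-\<bar>M\<bar> \<in> cbox a b" "\<bar>M\<bar> + 1/2 \<in> cbox a b"
        by (rule subsetD[OF ball]; simp)+
      then have ab: "a \<le> 0" "0 < b" "M \<le> b"
        by auto
      show "\<exists>z. ((\<lambda>x. if x \<in> {0<..} then g x else 0) has_integral z) (cbox a b) \<and> norm (z - (B - A)) < e"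
        using has_integral_zero_extension_Icc[OF deriv lim0, of a b] ab M[of b]
        by (intro exI[of _ "G b - A"]) (simp add: dist_real_def)
    qed simp
  qed
qed

lemma mono_bounded_convergent_at_top:
  fixes F :: "real \<Rightarrow> real"
  assumes mono: "\<And>x y. a \<le> x \<Longrightarrow> x \<le> y \<Longrightarrow> F x \<le> F y"
    and bounded: "\<And>x. a \<le> x \<Longrightarrow> F x \<le> K"
  obtains L where "(F \<longlongrightarrow> L) at_top"
proof -
  define f where "f x = F (max x a)" for x
  have "mono f"
    unfolding f_def mono_def by (auto intro!: mono)
  then have "incseq (\<lambda>n. f (real n))" and "\<And>n. f (real n) \<le> K"
    by (auto simp: incseq_def mono_def f_def intro!: bounded)
  then obtain L where "(\<lambda>n. f (real n)) \<longlonglongrightarrow> L"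
    using incseq_convergent by blast
  with \<open>mono f\<close> have "(f \<longlongrightarrow> L) at_top"
    by (rule tendsto_at_topI_sequentially_real)
  moreover have "eventually (\<lambda>x. f x = F x) at_top"
    using eventually_ge_at_top[of a] by eventually_elim (simp add: f_def)
  ultimately show ?thesis
    using that Lim_transform_eventually by blast
qed

section \<open>The integrals of 1 / (x^2 + c^2)^(n+1) and ln x / (x^2 + c^2)^(n+1)\<close>

lemma has_real_derivative_arctan_div:
  fixes c :: real
  assumes "c \<noteq> 0"
  shows "((\<lambda>x. arctan (x / c) / c) has_real_derivative 1 / (x\<^sup>2 + c\<^sup>2)) (at x)"
proof -
  have "((\<lambda>x. arctan (x / c) / c) has_real_derivative inverse (1 + (x / c)\<^sup>2) * (1 / c) / c) (at x)"
    using assms by (auto intro!: derivative_eq_intros)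
  moreover have "inverse (1 + (x / c)\<^sup>2) * (1 / c) / c = 1 / (c\<^sup>2 * (1 + (x / c)\<^sup>2))"
    by (simp add: inverse_eq_divide power2_eq_square)
  moreover have "c\<^sup>2 * (1 + (x / c)\<^sup>2) = x\<^sup>2 + c\<^sup>2"
    using assms by (simp add: field_simps power2_eq_square)
  ultimately show ?thesis by simp
qed

lemma has_integral_inverse_sq_plus_sq:
  fixes c :: real
  assumes c: "c > 0"
  shows "((\<lambda>x. 1 / (x\<^sup>2 + c\<^sup>2)) has_integral pi / (2 * c)) {0<..}"
proof -
  have "((\<lambda>x. arctan (x / c) / c) \<longlongrightarrow> arctan (0 / c) / c) (at_right 0)"
    using c by (intro tendsto_intros) auto
  then have lim0: "((\<lambda>x. arctan (x / c) / c) \<longlongrightarrow> 0) (at_right 0)"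
    by simp
  have "filterlim (\<lambda>x. x / c) at_top at_top"
    unfolding divide_inverse using c
    by (intro filterlim_at_top_mult_tendsto_pos[OF tendsto_const] filterlim_ident) simp
  then have "((\<lambda>x. arctan (x / c)) \<longlongrightarrow> pi / 2) at_top"
    by (rule filterlim_compose[OF tendsto_arctan_at_top])
  then have lim_top: "((\<lambda>x. arctan (x / c) / c) \<longlongrightarrow> pi / 2 / c) at_top"
    by (rule tendsto_divide[OF _ tendsto_const]) (use c in simp)
  have deriv: "((\<lambda>x. arctan (x / c) / c) has_real_derivative 1 / (x\<^sup>2 + c\<^sup>2)) (at x)" for x
    using c by (simp add: has_real_derivative_arctan_div)
  have "((\<lambda>x. 1 / (x\<^sup>2 + c\<^sup>2)) has_integral (pi / 2 / c - 0)) {0<..}"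
    by (rule has_integral_Ioi_FTC[OF deriv lim0 lim_top])
  then show ?thesis by simp
qed

lemma ln_over_sq_plus_sq_antiderivative:
  fixes c :: real
  obtains F L where "\<And>x. x > 0 \<Longrightarrow> (F has_real_derivative ln x / (x\<^sup>2 + c\<^sup>2)) (at x)"
    and "(F \<longlongrightarrow> L) at_top"
proof -
  have pos: "x\<^sup>2 + c\<^sup>2 > 0" if "x > 0" for x
    using that by (simp add: add_pos_nonneg)
  have "\<exists>F. \<forall>x. ereal 0 < ereal x \<longrightarrow> ereal x < \<infinity> \<longrightarrow>
          (F has_vector_derivative ln x / (x\<^sup>2 + c\<^sup>2)) (at x)"
    using pos by (intro einterval_antiderivative) (auto intro!: continuous_intros)
  then obtain F where F: "\<And>x. x > 0 \<Longrightarrow> (F has_real_derivative ln x / (x\<^sup>2 + c\<^sup>2)) (at x)"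
    by (auto simp: has_real_derivative_iff_has_vector_derivative)
  have mono: "F x \<le> F y" if "1 \<le> x" "x \<le> y" for x y
  proof (rule DERIV_nonneg_imp_nondecreasing[OF \<open>x \<le> y\<close>])
    fix t assume "x \<le> t"
    with \<open>1 \<le> x\<close> have "t > 0" "ln t \<ge> 0" by auto
    then show "\<exists>y. (F has_real_derivative y) (at t) \<and> 0 \<le> y"
      using F pos by (intro exI[of _ "ln t / (t\<^sup>2 + c\<^sup>2)"] conjI) auto
  qed
  define W where "W x = - (ln x + 1) / x" for x :: real
  have W: "(W has_real_derivative ln x / x\<^sup>2) (at x)" if "x > 0" for x
    unfolding W_def using that
    by (auto intro!: derivative_eq_intros simp: field_simps power2_eq_square)
  \<comment> \<open>Comparison with ln x / x^2, whose antiderivative W is nonpositive on [1,oo).\<close>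
  have bounded: "F x \<le> F 1 + 1" if "1 \<le> x" for x
  proof -
    have "F x - W x \<le> F 1 - W 1"
    proof (rule DERIV_nonpos_imp_nonincreasing[OF \<open>1 \<le> x\<close>])
      fix t :: real assume "1 \<le> t"
      then have "ln t / (t\<^sup>2 + c\<^sup>2) \<le> ln t / t\<^sup>2"
        using pos[of t] by (intro divide_left_mono) auto
      then show "\<exists>y. ((\<lambda>t. F t - W t) has_real_derivative y) (at t) \<and> y \<le> 0"
        using \<open>1 \<le> t\<close> by (intro exI[of _ "ln t / (t\<^sup>2 + c\<^sup>2) - ln t / t\<^sup>2"] conjI DERIV_diff F W) auto
    qed
    moreover have "W x \<le> 0"
      using that ln_ge_zero[OF that] unfolding W_def by (intro divide_nonpos_pos) linarith+
    ultimately show ?thesis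
      by (simp add: W_def)
  qed
  obtain L where "(F \<longlongrightarrow> L) at_top"
    using mono_bounded_convergent_at_top[of 1 F "F 1 + 1"] mono bounded by blast
  with F show ?thesis by (rule that)
qed

lemma has_integral_ln_over_sq_plus_sq:
  fixes c :: real
  assumes c: "c > 0"
  shows "((\<lambda>x. ln x / (x\<^sup>2 + c\<^sup>2)) has_integral pi * ln c / (2 * c)) {0<..}"
proof -
  obtain F L where F: "\<And>x. x > 0 \<Longrightarrow> (F has_real_derivative ln x / (x\<^sup>2 + c\<^sup>2)) (at x)"
    and L: "(F \<longlongrightarrow> L) at_top"
    using ln_over_sq_plus_sq_antiderivative[of c] by blast
  \<comment> \<open>The substitution x \<mapsto> c^2/x maps ln x / (x^2 + c^2) dx to (2 ln c - ln x) / (x^2 + c^2) dx.\<close>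
  define Q where "Q x = F x - F (c\<^sup>2 / x) - 2 * ln c * (arctan (x / c) / c)" for x
  have Q_deriv: "(Q has_real_derivative 0) (at x)" if x: "x > 0" for x
  proof -
    have "((\<lambda>x. c\<^sup>2 / x) has_real_derivative - (c\<^sup>2 / x\<^sup>2)) (at x)"
      using x by (auto intro!: derivative_eq_intros simp: power2_eq_square)
    then have reflected: "((\<lambda>x. F (c\<^sup>2 / x)) has_real_derivative
        ln (c\<^sup>2 / x) / ((c\<^sup>2 / x)\<^sup>2 + c\<^sup>2) * - (c\<^sup>2 / x\<^sup>2)) (at x)"
      using x c by (intro DERIV_chain2[OF F]) auto
    have "(Q has_real_derivative ln x / (x\<^sup>2 + c\<^sup>2) - ln (c\<^sup>2 / x) / ((c\<^sup>2 / x)\<^sup>2 + c\<^sup>2) * - (c\<^sup>2 / x\<^sup>2)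
         - 2 * ln c * (1 / (x\<^sup>2 + c\<^sup>2))) (at x)"
      unfolding Q_def using x c
      by (intro DERIV_diff DERIV_cmult F reflected has_real_derivative_arctan_div) auto
    moreover have "ln (c\<^sup>2 / x) / ((c\<^sup>2 / x)\<^sup>2 + c\<^sup>2) * (c\<^sup>2 / x\<^sup>2) = (2 * ln c - ln x) / (x\<^sup>2 + c\<^sup>2)"
    proof -
      have "(c\<^sup>2 / x)\<^sup>2 + c\<^sup>2 = (x\<^sup>2 + c\<^sup>2) * (c\<^sup>2 / x\<^sup>2)"
        using x by (simp add: field_simps power2_eq_square)
      moreover have "ln (c\<^sup>2 / x) = 2 * ln c - ln x"
        using x c by (simp add: ln_div ln_realpow)
      ultimately show ?thesis
        using x c by simp
    qed
    ultimately show ?thesis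
      by (simp add: diff_divide_distrib)
  qed
  have "\<exists>k. \<forall>x\<in>{0<..}. Q x = k"
    by (rule has_field_derivative_zero_constant) (auto intro: has_field_derivative_at_within Q_deriv)
  then obtain k where k: "\<And>x. x > 0 \<Longrightarrow> Q x = k"
    by auto
  have "k = - pi * ln c / (2 * c)"
    using k[OF c] c by (simp add: Q_def power2_eq_square arctan_one)
  then have F_eq: "F y = F (c\<^sup>2 / y) + 2 * ln c * (arctan (y / c) / c) - pi * ln c / (2 * c)"
    if "y > 0" for y
    using k[OF that] by (simp add: Q_def)
  have "filterlim (\<lambda>y. c\<^sup>2 / y) at_top (at_right 0)"
    using c by real_asymp
  then have "((\<lambda>y. F (c\<^sup>2 / y) + 2 * ln c * (arctan (y / c) / c) - pi * ln c / (2 * c))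
      \<longlongrightarrow> L + 2 * ln c * (arctan (0 / c) / c) - pi * ln c / (2 * c)) (at_right 0)"
    using c by (intro tendsto_intros filterlim_compose[OF L]) auto
  then have "((\<lambda>y. F (c\<^sup>2 / y) + 2 * ln c * (arctan (y / c) / c) - pi * ln c / (2 * c))
      \<longlongrightarrow> L - pi * ln c / (2 * c)) (at_right 0)"
    by simp
  moreover have "eventually (\<lambda>y. F (c\<^sup>2 / y) + 2 * ln c * (arctan (y / c) / c) - pi * ln c / (2 * c) = F y)
      (at_right 0)"
    by (rule eventually_at_rightI[of 0 1]) (simp_all add: F_eq)
  ultimately have "(F \<longlongrightarrow> L - pi * ln c / (2 * c)) (at_right 0)"
    by (rule Lim_transform_eventually)
  from has_integral_Ioi_FTC[OF F this L] show ?thesis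
    by simp
qed

lemma has_real_derivative_x_over_pow_sq_plus_sq:
  fixes c x :: real
  assumes "c \<noteq> 0"
  shows "((\<lambda>x. x / (x\<^sup>2 + c\<^sup>2) ^ (n + 1)) has_real_derivative
           2 * (real n + 1) * c\<^sup>2 / (x\<^sup>2 + c\<^sup>2) ^ (n + 2) - (2 * real n + 1) / (x\<^sup>2 + c\<^sup>2) ^ (n + 1)) (at x)"
proof -
  let ?P = "x\<^sup>2 + c\<^sup>2"
  have "?P > 0"
    using assms by (simp add: add_nonneg_pos)
  have "((\<lambda>x. x\<^sup>2 + c\<^sup>2) has_real_derivative 2 * x) (at x)"
    by (auto intro!: derivative_eq_intros)
  from DERIV_power[OF this, of "n + 1"]
  have power_deriv:
    "((\<lambda>x. (x\<^sup>2 + c\<^sup>2) ^ (n + 1)) has_real_derivative (real n + 1) * ?P ^ n * (2 * x)) (at x)"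
    by (simp add: ac_simps)
  have quotient_eq: "(1 * P ^ (n + 1) - (real n + 1) * P ^ n * (2 * x) * x) / (P ^ (n + 1)) ^ Suc (Suc 0)
      = 2 * (real n + 1) * (P - x\<^sup>2) / P ^ (n + 2) - (2 * real n + 1) / P ^ (n + 1)" if "P > 0" for P :: real
  proof -
    have "(1 * (Q * P) - (real n + 1) * Q * (2 * x) * x) / ((Q * P) * (Q * P))
        = 2 * (real n + 1) * (P - x\<^sup>2) / (Q * P * P) - (2 * real n + 1) / (Q * P)" if "Q > 0" for Q :: real
      using \<open>P > 0\<close> that by (simp add: field_simps power2_eq_square)
    from this[of "P ^ n"] show ?thesis
      using \<open>P > 0\<close> by (simp add: power_add power2_eq_square ac_simps)
  qed
  have "((\<lambda>x. x / (x\<^sup>2 + c\<^sup>2) ^ (n + 1)) has_real_derivative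
      (1 * ?P ^ (n + 1) - (real n + 1) * ?P ^ n * (2 * x) * x) / (?P ^ (n + 1)) ^ Suc (Suc 0)) (at x)"
    by (rule DERIV_quotient[OF DERIV_ident power_deriv]) (use assms in simp)
  then show ?thesis
    unfolding quotient_eq[OF \<open>?P > 0\<close>] by (simp add: ac_simps)
qed

lemma x_over_pow_sq_plus_sq_bounds:
  fixes c x :: real
  assumes "1 \<le> x"
  shows "0 \<le> x / (x\<^sup>2 + c\<^sup>2) ^ (n + 1)" and "x / (x\<^sup>2 + c\<^sup>2) ^ (n + 1) \<le> 1 / x"
proof -
  have "1 \<le> x\<^sup>2 + c\<^sup>2"
    using one_le_power[OF assms, of 2] zero_le_power2[of c] by linarith
  have "x\<^sup>2 \<le> (x\<^sup>2 + c\<^sup>2) ^ 1"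
    by simp
  also have "\<dots> \<le> (x\<^sup>2 + c\<^sup>2) ^ (n + 1)"
    by (rule power_increasing) (use \<open>1 \<le> x\<^sup>2 + c\<^sup>2\<close> in auto)
  finally have "x / (x\<^sup>2 + c\<^sup>2) ^ (n + 1) \<le> x / x\<^sup>2"
    using assms \<open>1 \<le> x\<^sup>2 + c\<^sup>2\<close> by (intro divide_left_mono mult_pos_pos zero_less_power) auto
  then show "x / (x\<^sup>2 + c\<^sup>2) ^ (n + 1) \<le> 1 / x"
    using assms by (simp add: power2_eq_square)
  show "0 \<le> x / (x\<^sup>2 + c\<^sup>2) ^ (n + 1)"
    using assms by simp
qed

lemma tendsto_x_over_pow_sq_plus_sq:
  fixes c :: real
  assumes "c \<noteq> 0"
  shows "((\<lambda>x. x / (x\<^sup>2 + c\<^sup>2) ^ (n + 1)) \<longlongrightarrow> 0) (at_right 0)"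
    and "((\<lambda>x. x / (x\<^sup>2 + c\<^sup>2) ^ (n + 1)) \<longlongrightarrow> 0) at_top"
proof -
  have "((\<lambda>x. x / (x\<^sup>2 + c\<^sup>2) ^ (n + 1)) \<longlongrightarrow> 0 / (0\<^sup>2 + c\<^sup>2) ^ (n + 1)) (at_right 0)"
    using assms by (intro tendsto_intros) auto
  then show "((\<lambda>x. x / (x\<^sup>2 + c\<^sup>2) ^ (n + 1)) \<longlongrightarrow> 0) (at_right 0)"
    by simp
  have lower: "eventually (\<lambda>x. 0 \<le> x / (x\<^sup>2 + c\<^sup>2) ^ (n + 1)) at_top"
    using eventually_ge_at_top[of 1] by eventually_elim (rule x_over_pow_sq_plus_sq_bounds)
  have upper: "eventually (\<lambda>x. x / (x\<^sup>2 + c\<^sup>2) ^ (n + 1) \<le> 1 / x) at_top"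
    using eventually_ge_at_top[of 1] by eventually_elim (rule x_over_pow_sq_plus_sq_bounds)
  have "((\<lambda>x::real. 1 / x) \<longlongrightarrow> 0) at_top"
    by real_asymp
  with lower upper show "((\<lambda>x. x / (x\<^sup>2 + c\<^sup>2) ^ (n + 1)) \<longlongrightarrow> 0) at_top"
    by (rule tendsto_sandwich[OF _ _ tendsto_const])
qed

lemma tendsto_ln_times_x_over_pow_sq_plus_sq:
  fixes c :: real
  assumes "c \<noteq> 0"
  shows "((\<lambda>x. ln x * (x / (x\<^sup>2 + c\<^sup>2) ^ (n + 1))) \<longlongrightarrow> 0) (at_right 0)"
    and "((\<lambda>x. ln x * (x / (x\<^sup>2 + c\<^sup>2) ^ (n + 1))) \<longlongrightarrow> 0) at_top"
proof -
  have "((\<lambda>x::real. x * ln x) \<longlongrightarrow> 0) (at_right 0)"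
    by real_asymp
  then have "((\<lambda>x. x * ln x * (1 / (x\<^sup>2 + c\<^sup>2) ^ (n + 1))) \<longlongrightarrow> 0 * (1 / (0\<^sup>2 + c\<^sup>2) ^ (n + 1))) (at_right 0)"
    using assms by (intro tendsto_intros) auto
  then show "((\<lambda>x. ln x * (x / (x\<^sup>2 + c\<^sup>2) ^ (n + 1))) \<longlongrightarrow> 0) (at_right 0)"
    by (simp add: mult.commute)
  have "((\<lambda>x::real. ln x * (1 / x)) \<longlongrightarrow> 0) at_top"
    by real_asymp
  moreover have "eventually (\<lambda>x. 0 \<le> ln x * (x / (x\<^sup>2 + c\<^sup>2) ^ (n + 1))) at_top"
    using eventually_ge_at_top[of 1]
    by eventually_elim (simp add: x_over_pow_sq_plus_sq_bounds)
  moreover have "eventually (\<lambda>x. ln x * (x / (x\<^sup>2 + c\<^sup>2) ^ (n + 1)) \<le> ln x * (1 / x)) at_top"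
    using eventually_ge_at_top[of 1]
    by eventually_elim (rule mult_left_mono[OF x_over_pow_sq_plus_sq_bounds(2)]; simp)
  ultimately show "((\<lambda>x. ln x * (x / (x\<^sup>2 + c\<^sup>2) ^ (n + 1))) \<longlongrightarrow> 0) at_top"
    by (rule tendsto_sandwich[OF _ _ tendsto_const, rotated 2])
qed

lemma has_integral_inverse_pow_sq_plus_sq_Suc:
  fixes c I :: real
  assumes c: "c \<noteq> 0" and I: "((\<lambda>x. 1 / (x\<^sup>2 + c\<^sup>2) ^ (n + 1)) has_integral I) {0<..}"
  shows "((\<lambda>x. 1 / (x\<^sup>2 + c\<^sup>2) ^ (n + 2)) has_integral
           (2 * real n + 1) * I / (2 * (real n + 1) * c\<^sup>2)) {0<..}"
proof -
  have "((\<lambda>x. 2 * (real n + 1) * c\<^sup>2 / (x\<^sup>2 + c\<^sup>2) ^ (n + 2) - (2 * real n + 1) / (x\<^sup>2 + c\<^sup>2) ^ (n + 1))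
      has_integral 0 - 0) {0<..}"
    by (rule has_integral_Ioi_FTC[OF has_real_derivative_x_over_pow_sq_plus_sq[OF c]
          tendsto_x_over_pow_sq_plus_sq[OF c]])
  from has_integral_add[OF this has_integral_mult_right[OF I, of "2 * real n + 1"]]
  have "((\<lambda>x. 2 * (real n + 1) * c\<^sup>2 * (1 / (x\<^sup>2 + c\<^sup>2) ^ (n + 2))) has_integral
      (2 * real n + 1) * I) {0<..}"
    by simp
  then show ?thesis
    using has_integral_mult_right_iff[of "2 * (real n + 1) * c\<^sup>2" "\<lambda>x. 1 / (x\<^sup>2 + c\<^sup>2) ^ (n + 2)"] c
    by simp
qed

lemma has_integral_ln_over_pow_sq_plus_sq_Suc:
  fixes c I J :: real
  assumes c: "c \<noteq> 0"
    and I: "((\<lambda>x. 1 / (x\<^sup>2 + c\<^sup>2) ^ (n + 1)) has_integral I) {0<..}"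
    and J: "((\<lambda>x. ln x / (x\<^sup>2 + c\<^sup>2) ^ (n + 1)) has_integral J) {0<..}"
  shows "((\<lambda>x. ln x / (x\<^sup>2 + c\<^sup>2) ^ (n + 2)) has_integral
           ((2 * real n + 1) * J - I) / (2 * (real n + 1) * c\<^sup>2)) {0<..}"
proof -
  let ?g = "\<lambda>x. 2 * (real n + 1) * c\<^sup>2 / (x\<^sup>2 + c\<^sup>2) ^ (n + 2) - (2 * real n + 1) / (x\<^sup>2 + c\<^sup>2) ^ (n + 1)"
  have "((\<lambda>x. ln x * (x / (x\<^sup>2 + c\<^sup>2) ^ (n + 1))) has_real_derivative
      ln x * ?g x + 1 / (x\<^sup>2 + c\<^sup>2) ^ (n + 1)) (at x)" if "x > 0" for x
    by (rule DERIV_cong[OF DERIV_mult[OF DERIV_ln[OF that] has_real_derivative_x_over_pow_sq_plus_sq[OF c]]])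
       (use that in \<open>simp add: ac_simps\<close>)
  from has_integral_Ioi_FTC[OF this tendsto_ln_times_x_over_pow_sq_plus_sq[OF c]]
  have "((\<lambda>x. ln x * ?g x + 1 / (x\<^sup>2 + c\<^sup>2) ^ (n + 1)) has_integral 0 - 0) {0<..}" .
  from has_integral_add[OF has_integral_diff[OF this I] has_integral_mult_right[OF J, of "2 * real n + 1"]]
  have "((\<lambda>x. 2 * (real n + 1) * c\<^sup>2 * (ln x / (x\<^sup>2 + c\<^sup>2) ^ (n + 2))) has_integral
      (2 * real n + 1) * J - I) {0<..}"
    by (simp add: algebra_simps)
  then show ?thesis
    using has_integral_mult_right_iff[of "2 * (real n + 1) * c\<^sup>2" "\<lambda>x. ln x / (x\<^sup>2 + c\<^sup>2) ^ (n + 2)"] c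
    by simp
qed

definition wallis :: "nat \<Rightarrow> real" where
  "wallis n = real ((2 * n) choose n) * pi / 2 ^ (2 * n + 1)"

lemma Suc_times_central_binomial:
  "Suc n * (2 * Suc n choose Suc n) = 2 * (2 * n + 1) * (2 * n choose n)"
  by (metis Suc_eq_plus1 Suc_times_binomial Suc_times_binomial_add add_2_eq_Suc
      add_mult_distrib mult_Suc_right nat_mult_1 one_add_one)

lemma wallis_Suc: "wallis (Suc n) = (2 * real n + 1) * wallis n / (2 * (real n + 1))"
proof -
  have central: "(real n + 1) * real (2 * Suc n choose Suc n) = 2 * (2 * real n + 1) * real (2 * n choose n)"
    using arg_cong[OF Suc_times_central_binomial, of real]
    by (simp only: of_nat_mult of_nat_Suc of_nat_add of_nat_numeral of_nat_1 add.commute)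
  have power: "(2::real) ^ (2 * Suc n + 1) = 4 * 2 ^ (2 * n + 1)"
    by simp
  have field_identity: "B * pi / (4 * X) = q * (A * pi / X) / (2 * p)"
    if "p * B = 2 * q * A" "p > 0" "X > 0" for A B X p q :: real
  proof -
    have "B = 2 * q * A / p"
      using that by (simp add: field_simps)
    then show ?thesis
      using that by (simp add: field_simps)
  qed
  show ?thesis
    unfolding wallis_def power by (rule field_identity[OF central]) simp_all
qed

lemma has_integral_inverse_pow_sq_plus_sq:
  fixes c :: real
  assumes "c > 0"
  shows "((\<lambda>x. 1 / (x\<^sup>2 + c\<^sup>2) ^ (n + 1)) has_integral wallis n / c ^ (2 * n + 1)) {0<..}"
proof (induction n)
  case 0
  then show ?case
    using has_integral_inverse_sq_plus_sq[OF assms] by (simp add: wallis_def)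
next
  case (Suc n)
  have "(2 * real n + 1) * (wallis n / c ^ (2 * n + 1)) / (2 * (real n + 1) * c\<^sup>2)
      = wallis (Suc n) / c ^ (2 * Suc n + 1)"
    using assms by (simp add: wallis_Suc field_simps power2_eq_square)
  moreover have "Suc n + 1 = n + 2"
    by simp
  ultimately show ?case
    using has_integral_inverse_pow_sq_plus_sq_Suc[OF _ Suc.IH] assms by simp_all
qed

lemma has_integral_ln_over_pow_sq_plus_sq:
  fixes c :: real
  assumes "c > 0"
  shows "((\<lambda>x. ln x / (x\<^sup>2 + c\<^sup>2) ^ (n + 1)) has_integral
           wallis n * (ln c - oddharm n) / c ^ (2 * n + 1)) {0<..}"
proof (induction n)
  case 0
  then show ?case
    using has_integral_ln_over_sq_plus_sq[OF assms] by (simp add: wallis_def oddharm_def)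
next
  case (Suc n)
  have oddharm_Suc: "oddharm (Suc n) = oddharm n + 1 / (2 * real n + 1)"
    by (simp add: oddharm_def)
  have "(q * (W * (l - h) / C) - W / C) / (2 * p * d) = q * W / (2 * p) * (l - (h + 1 / q)) / (C * d)"
    if "C > 0" "d > 0" "p > 0" "q > 0" for W C l h p q d :: real
    using that by (simp add: field_simps)
  from this[of "c ^ (2 * n + 1)" "c\<^sup>2" "real n + 1" "2 * real n + 1"] assms
  have "((2 * real n + 1) * (wallis n * (ln c - oddharm n) / c ^ (2 * n + 1)) - wallis n / c ^ (2 * n + 1))
        / (2 * (real n + 1) * c\<^sup>2)
      = wallis (Suc n) * (ln c - oddharm (Suc n)) / c ^ (2 * Suc n + 1)"
    unfolding oddharm_Suc wallis_Suc by (simp add: power2_eq_square)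
  moreover have "Suc n + 1 = n + 2"
    by simp
  ultimately show ?case
    using has_integral_ln_over_pow_sq_plus_sq_Suc[OF _ has_integral_inverse_pow_sq_plus_sq[OF assms] Suc.IH]
      assms by simp_all
qed

section \<open>Lucas and Fibonacci numbers at even indices\<close>

lemma lucas_eq_power_sum:
  fixes p q :: real
  assumes "p\<^sup>2 = p + 1" "q\<^sup>2 = q + 1" "p + q = 1"
  shows "real (lucas n) = p ^ n + q ^ n"
proof (induction n rule: lucas.induct)
  case (3 n)
  have "x ^ Suc (Suc n) = x ^ Suc n + x ^ n" if "x\<^sup>2 = x + 1" for x :: real
  proof -
    have "x ^ Suc (Suc n) = x\<^sup>2 * x ^ n"
      by (simp add: power2_eq_square)
    also have "\<dots> = x ^ Suc n + x ^ n"
      by (simp add: that algebra_simps)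
    finally show ?thesis .
  qed
  with 3 assms show ?case
    by simp
qed (use assms in simp_all)

lemma golden_pos: "golden > 0"
  unfolding golden_def by (intro divide_pos_pos add_pos_nonneg) auto

lemma golden_conjugate: "(1 - sqrt 5) / 2 = - 1 / golden"
proof -
  have "golden * ((1 - sqrt 5) / 2) = -1"
    by (simp add: golden_def field_simps)
  with golden_pos show ?thesis
    by (simp add: field_simps)
qed

lemma lucas_closed_form: "real (lucas n) = golden ^ n + ((1 - sqrt 5) / 2) ^ n"
  by (rule lucas_eq_power_sum) (simp_all add: golden_def field_simps power2_eq_square)

lemma conjugate_power_even: "((1 - sqrt 5) / 2) ^ (2 * m * k) = (1 / golden ^ (2 * m)) ^ k"
  unfolding golden_conjugate by (simp add: power_mult power_divide power_one_over)

lemma lucas_even_mult: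
  "real (lucas (2 * m * k)) = (golden ^ (2 * m)) ^ k + (1 / golden ^ (2 * m)) ^ k"
  unfolding lucas_closed_form conjugate_power_even by (simp add: power_mult)

lemma fib_even_mult:
  "real (fib (2 * m * k)) = ((golden ^ (2 * m)) ^ k - (1 / golden ^ (2 * m)) ^ k) / sqrt 5"
  using fib_closed_form[of "2 * m * k"] unfolding golden_def[symmetric] conjugate_power_even
  by (simp add: power_mult)

lemma sum_binomial_power_sq:
  fixes x y :: real
  shows "(\<Sum>j=0..N. real (N choose j) * y ^ (N - j) * x ^ (2 * j)) = (x\<^sup>2 + y) ^ N"
proof -
  have "(x\<^sup>2 + y) ^ N = (\<Sum>j=0..N. real (N choose j) * (x\<^sup>2) ^ j * y ^ (N - j))"
    by (simp only: binomial_ring atMost_atLeast0)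
  also have "\<dots> = (\<Sum>j=0..N. real (N choose j) * y ^ (N - j) * x ^ (2 * j))"
    by (rule sum.cong) (simp_all add: power_mult[symmetric] mult_ac)
  finally show ?thesis
    by (rule sym)
qed

lemma has_integral_ln_reciprocal_pair:
  fixes a s :: real
  assumes a: "a > 0"
  shows "((\<lambda>x. ((x\<^sup>2 + a\<^sup>2) ^ (n + 1) + s * (x\<^sup>2 + (1 / a)\<^sup>2) ^ (n + 1))
              / ((x\<^sup>2 + a\<^sup>2) * (x\<^sup>2 + (1 / a)\<^sup>2)) ^ (n + 1) * ln x)
         has_integral - wallis n * (ln a * (a ^ (2 * n + 1) - s / a ^ (2 * n + 1))
                                    + oddharm n * (a ^ (2 * n + 1) + s / a ^ (2 * n + 1)))) {0<..}"
proof -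
  have "((\<lambda>x. ln x / (x\<^sup>2 + (1 / a)\<^sup>2) ^ (n + 1) + s * (ln x / (x\<^sup>2 + a\<^sup>2) ^ (n + 1))) has_integral
      wallis n * (ln (1 / a) - oddharm n) / (1 / a) ^ (2 * n + 1)
      + s * (wallis n * (ln a - oddharm n) / a ^ (2 * n + 1))) {0<..}"
    using a by (intro has_integral_add has_integral_mult_right has_integral_ln_over_pow_sq_plus_sq) auto
  moreover have "((x\<^sup>2 + a\<^sup>2) ^ (n + 1) + s * (x\<^sup>2 + (1 / a)\<^sup>2) ^ (n + 1))
              / ((x\<^sup>2 + a\<^sup>2) * (x\<^sup>2 + (1 / a)\<^sup>2)) ^ (n + 1) * ln x
      = ln x / (x\<^sup>2 + (1 / a)\<^sup>2) ^ (n + 1) + s * (ln x / (x\<^sup>2 + a\<^sup>2) ^ (n + 1))" for x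
  proof -
    have "(U + s * V) / (U * V) * l = l / V + s * (l / U)" if "U > 0" "V > 0" for U V l :: real
      using that by (simp add: field_simps)
    then show ?thesis
      unfolding power_mult_distrib using a by (simp add: add_nonneg_pos)
  qed
  moreover have "wallis n * (ln (1 / a) - oddharm n) / (1 / a) ^ (2 * n + 1)
      + s * (wallis n * (ln a - oddharm n) / a ^ (2 * n + 1))
      = - wallis n * (ln a * (a ^ (2 * n + 1) - s / a ^ (2 * n + 1))
                      + oddharm n * (a ^ (2 * n + 1) + s / a ^ (2 * n + 1)))"
    using a by (simp add: ln_div power_one_over field_simps)
  ultimately show ?thesis
    by simp
qed

lemma sum_binomial_lucas_even:
  fixes x :: real and m :: nat
  defines "a \<equiv> golden ^ (2 * m)"
  shows "(\<Sum>j=0..N. real (N choose j) * real (lucas (4 * m * (N - j))) * x ^ (2 * j))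
       = (x\<^sup>2 + a\<^sup>2) ^ N + (x\<^sup>2 + (1 / a)\<^sup>2) ^ N"
proof -
  have "real (lucas (4 * m * k)) = (a\<^sup>2) ^ k + ((1 / a)\<^sup>2) ^ k" for k
  proof -
    have "4 * m * k = 2 * m * (2 * k)"
      by simp
    then show ?thesis
      unfolding a_def using lucas_even_mult[of m "2 * k"] by (simp only: power_mult)
  qed
  then show ?thesis
    by (simp add: sum_binomial_power_sq[symmetric] distrib_left distrib_right sum.distrib)
qed

lemma sum_binomial_fib_even:
  fixes x :: real and m :: nat
  defines "a \<equiv> golden ^ (2 * m)"
  shows "(\<Sum>j=0..N. real (N choose j) * real (fib (4 * m * (N - j))) * x ^ (2 * j))
       = ((x\<^sup>2 + a\<^sup>2) ^ N - (x\<^sup>2 + (1 / a)\<^sup>2) ^ N) / sqrt 5"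
proof -
  have "real (fib (4 * m * k)) = ((a\<^sup>2) ^ k - ((1 / a)\<^sup>2) ^ k) / sqrt 5" for k
  proof -
    have "4 * m * k = 2 * m * (2 * k)"
      by simp
    then show ?thesis
      unfolding a_def using fib_even_mult[of m "2 * k"] by (simp only: power_mult)
  qed
  then show ?thesis
    by (simp add: sum_binomial_power_sq[symmetric] left_diff_distrib right_diff_distrib
        diff_divide_distrib sum_subtractf sum_divide_distrib)
qed

lemma quartic_lucas_factor:
  fixes x :: real and m :: nat
  defines "a \<equiv> golden ^ (2 * m)"
  shows "x ^ 4 + real (lucas (4 * m)) * x\<^sup>2 + 1 = (x\<^sup>2 + a\<^sup>2) * (x\<^sup>2 + (1 / a)\<^sup>2)"
proof -
  have "4 * m = 2 * m * 2"
    by simp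
  then have lucas_4m: "real (lucas (4 * m)) = a\<^sup>2 + (1 / a)\<^sup>2"
    using lucas_even_mult[of m 2] by (simp only: a_def)
  have "a \<noteq> 0"
    using golden_pos by (simp add: a_def)
  then show ?thesis
    unfolding lucas_4m by (simp add: field_simps power2_eq_square power4_eq_xxxx)
qed

lemma has_integral_lucas_numerator:
  fixes m n :: nat
  shows "((\<lambda>x::real. (\<Sum>j=0..n+1. real (n+1 choose j) * real (lucas (4*m*(n+1-j))) * x^(2*j))
             / (x^4 + real (lucas (4*m)) * x^2 + 1)^(n+1) * ln x)
          has_integral
          (- real ((2*n) choose n) * pi / 2^(2*n+1)
             * (2 * real m * sqrt 5 * real (fib (2*m*(2*n+1))) * ln golden
                + oddharm n * real (lucas (2*m*(2*n+1)))))) {0<..}"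
proof -
  define a where "a = golden ^ (2 * m)"
  let ?A = "a ^ (2 * n + 1)"
  have "a > 0"
    using golden_pos by (simp add: a_def)
  have "- wallis n * (ln a * (?A - 1 / ?A) + oddharm n * (?A + 1 / ?A))
      = - real ((2*n) choose n) * pi / 2^(2*n+1)
          * (2 * real m * sqrt 5 * real (fib (2*m*(2*n+1))) * ln golden
             + oddharm n * real (lucas (2*m*(2*n+1))))"
    using golden_pos lucas_even_mult[of m "2 * n + 1"] fib_even_mult[of m "2 * n + 1"]
    by (simp add: wallis_def a_def ln_realpow power_one_over)
  with has_integral_ln_reciprocal_pair[OF \<open>a > 0\<close>, of n 1] show ?thesis
    unfolding sum_binomial_lucas_even quartic_lucas_factor a_def[symmetric] by simp
qed

lemma has_integral_fib_numerator:
  fixes m n :: nat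
  shows "((\<lambda>x::real. (\<Sum>j=0..n+1. real (n+1 choose j) * real (fib (4*m*(n+1-j))) * x^(2*j))
             / (x^4 + real (lucas (4*m)) * x^2 + 1)^(n+1) * ln x)
          has_integral
          (- real ((2*n) choose n) * pi / 2^(2*n+1)
             * (2 * real m / sqrt 5 * real (lucas (2*m*(2*n+1))) * ln golden
                + oddharm n * real (fib (2*m*(2*n+1)))))) {0<..}"
proof -
  define a where "a = golden ^ (2 * m)"
  let ?A = "a ^ (2 * n + 1)"
  have "a > 0"
    using golden_pos by (simp add: a_def)
  have closed_form: "- wallis n * (ln a * (?A - - 1 / ?A) + oddharm n * (?A + - 1 / ?A)) / sqrt 5
      = - real ((2*n) choose n) * pi / 2^(2*n+1)
          * (2 * real m / sqrt 5 * real (lucas (2*m*(2*n+1))) * ln golden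
             + oddharm n * real (fib (2*m*(2*n+1))))"
  proof -
    have lucas_odd: "real (lucas (2 * m * (2 * n + 1))) = ?A + 1 / ?A"
      and fib_odd: "real (fib (2 * m * (2 * n + 1))) = (?A - 1 / ?A) / sqrt 5"
      using lucas_even_mult[of m "2 * n + 1"] fib_even_mult[of m "2 * n + 1"]
      by (simp_all only: a_def power_one_over)
    have ln_a: "ln a = 2 * real m * ln golden"
      using golden_pos by (simp add: a_def ln_realpow)
    show ?thesis
      unfolding lucas_odd fib_odd ln_a wallis_def using \<open>a > 0\<close> by (simp add: field_simps)
  qed
  have shape: "u / v * l / w = u / w / v * l" for u v w l :: real
    by (simp add: divide_inverse ac_simps)
  have "((\<lambda>x. ((x\<^sup>2 + a\<^sup>2) ^ (n + 1) + - 1 * (x\<^sup>2 + (1 / a)\<^sup>2) ^ (n + 1)) / sqrt 5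
        / ((x\<^sup>2 + a\<^sup>2) * (x\<^sup>2 + (1 / a)\<^sup>2)) ^ (n + 1) * ln x) has_integral
      - wallis n * (ln a * (?A - - 1 / ?A) + oddharm n * (?A + - 1 / ?A)) / sqrt 5) {0<..}"
    using has_integral_divide[OF has_integral_ln_reciprocal_pair[OF \<open>a > 0\<close>, of n "- 1"], of "sqrt 5"]
    by (simp only: shape)
  with closed_form show ?thesis
    unfolding sum_binomial_fib_even quartic_lucas_factor a_def[symmetric] by simp
qed

theorem theorem26:
  fixes m n :: nat
  assumes "m \<ge> 1"
  shows "((\<lambda>x::real. (\<Sum>j=0..n+1. real (n+1 choose j) * real (lucas (4*m*(n+1-j))) * x^(2*j))
             / (x^4 + real (lucas (4*m)) * x^2 + 1)^(n+1) * ln x)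
          has_integral
          (- real ((2*n) choose n) * pi / 2^(2*n+1)
             * (2 * real m * sqrt 5 * real (fib (2*m*(2*n+1))) * ln golden
                + oddharm n * real (lucas (2*m*(2*n+1)))))) {0<..}
       \<and>
         ((\<lambda>x::real. (\<Sum>j=0..n+1. real (n+1 choose j) * real (fib (4*m*(n+1-j))) * x^(2*j))
             / (x^4 + real (lucas (4*m)) * x^2 + 1)^(n+1) * ln x)
          has_integral
          (- real ((2*n) choose n) * pi / 2^(2*n+1)
             * (2 * real m / sqrt 5 * real (lucas (2*m*(2*n+1))) * ln golden
                + oddharm n * real (fib (2*m*(2*n+1)))))) {0<..}"
  using has_integral_lucas_numerator has_integral_fib_numerator by blast

end
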